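(* Let $r\ge 3$, $n\ge1$, $N\ge0$ be integers and let $a,b_1,\dots,b_{r-3},q,x$ be nonzero complex parameters, generic so that no denominators vanish (no balancing condition is assumed). Then $${}_{r+1}\Omega_r^{(n)}(a;b_1,\dots,b_{r-3},q^{-N};q,x)={}_{r+1}\Omega_r^{(N)}(aqx;b_1,\dots,b_{r-3},x^{n};x^{-1},q^{-1}).$$ More precisely, the identity holds termwise: the term of the left-hand sum indexed by $\lambda\in\Lambda_{nN}$ equals the term of the right-hand sum indexed by the conjugate partition $\lambda'\in\Lambda_{Nn}$.
   Context: Fix $p\in\mathbb C$ with $|p|<1$. For nonzero $y$, $E(y)=\prod_{j=0}^\infty(1-yp^j)(1-p^{j+1}/y)$, $E(y_1,\dots,y_m)=\prod_s E(y_s)$. For a base $Q$ and integer $k\ge0$, $(y;Q)_k=\prod_{j=0}^{k-1}E(yQ^j)$; for $k<0$, $(y;Q)_k=1/(yQ^{k};Q)_{-k}$; $(y_1,\dots,y_m;Q)_k=\prod_s(y_s;Q)_k$. For $\lambda\in\mathbb Z^n$ and bases $Q,X$, $(y;Q,X)_\lambda=\prod_{j=1}^n(yX^{1-j};Q)_{\lambda_j}$, $(y_1,\dots,y_m;Q,X)_\lambda=\prod_s(y_s;Q,X)_\lambda$. Let $\Lambda_{nN}=\{\lambda\in\mathbb Z^n: N\ge\lambda_1\ge\dots\ge\lambda_n\ge0\}$. For $\lambda\in\Lambda_{nN}$ its conjugate is $\lambda'\in\Lambda_{Nn}$ with $\lambda'_j=\#\{i:\lambda_i\ge j\}$, $j=1,\dots,N$.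 For integers $n\ge1$, $M\ge0$, bases $Q,X$ and parameters $a,b_1,\dots,b_{r-3}$, define \begin{multline*} {}_{r+1}\Omega_r^{(n)}(a;b_1,\dots,b_{r-3},Q^{-M};Q,X)=\sum_{\lambda\in\Lambda_{nM}}\prod_{i=1}^n\left(\frac{E(aX^{2(1-i)}Q^{2\lambda_i})}{E(aX^{2(1-i)})}Q^{\lambda_i}X^{2(i-1)\lambda_i}\right)\\ \times\prod_{1\le i<j\le n}\left(\frac{E(X^{j-i}Q^{\lambda_i-\lambda_j})}{E(X^{j-i})}\frac{E(aX^{2-i-j}Q^{\lambda_i+\lambda_j})}{E(aX^{2-i-j})}\frac{(aX^{3-i-j};Q)_{\lambda_i+\lambda_j}(X^{j-i+1};Q)_{\lambda_i-\lambda_j}}{(aQX^{1-i-j};Q)_{\lambda_i+\lambda_j}(QX^{j-i-1};Q)_{\lambda_i-\lambda_j}}\right)\\ \times\frac{(aX^{1-n},b_1,\dots,b_{r-3},Q^{-M};Q,X)_\lambda}{(QX^{n-1},aQ/b_1,\dots,aQ/b_{r-3},aQ^{M+1};Q,X)_\lambda}. \end{multline*} On the right-hand side of the claim this is used with $n\mapsto N$, $M\mapsto n$, $Q=x^{-1}$, $X=q^{-1}$ (so that $Q^{-M}=x^n$) and $a\mapsto aqx$. *)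

theory Defs
  imports "HOL-Analysis.Analysis"
begin

definition Eth :: "complex \<Rightarrow> complex \<Rightarrow> complex" where
  "Eth p y = (\<Prod>j. (1 - y * p ^ j) * (1 - p ^ (j + 1) / y))"

definition epoch :: "complex \<Rightarrow> complex \<Rightarrow> complex \<Rightarrow> int \<Rightarrow> complex" where
  "epoch p y Q k =
     (if 0 \<le> k then (\<Prod>j<nat k. Eth p (y * Q ^ j))
      else 1 / (\<Prod>j<nat (- k). Eth p (y * Q powi k * Q ^ j)))"

definition epochP :: "complex \<Rightarrow> complex list \<Rightarrow> complex \<Rightarrow> complex \<Rightarrow> nat \<Rightarrow> (nat \<Rightarrow> int) \<Rightarrow> complex" where
  "epochP p ys Q X n lam =
     (\<Prod>y\<leftarrow>ys. \<Prod>j\<in>{1..n}. epoch p (y * X powi (1 - int j)) Q (lam j))"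

text \<open>Lambda_{nN}: partitions with at most n parts, each at most N (entries indexed 1..n,
  extended by 0 outside so that the set is finite).\<close>
definition Lam :: "nat \<Rightarrow> nat \<Rightarrow> (nat \<Rightarrow> nat) set" where
  "Lam n N = {lam. (\<forall>i. lam i \<le> N) \<and> (\<forall>i j. 1 \<le> i \<longrightarrow> i \<le> j \<longrightarrow> j \<le> n \<longrightarrow> lam j \<le> lam i)
                  \<and> (\<forall>i. i \<notin> {1..n} \<longrightarrow> lam i = 0)}"

definition conjp :: "nat \<Rightarrow> nat \<Rightarrow> (nat \<Rightarrow> nat) \<Rightarrow> (nat \<Rightarrow> nat)" where
  "conjp n N lam = (\<lambda>j. if j \<in> {1..N} then card {i\<in>{1..n}. j \<le> lam i} else 0)"

definition omega_term ::
  "complex \<Rightarrow> nat \<Rightarrow> nat \<Rightarrow> complex \<Rightarrow> complex list \<Rightarrow> complex \<Rightarrow> complex \<Rightarrow> (nat \<Rightarrow> nat) \<Rightarrow> complex" where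
  "omega_term p n M a bs Q X lam =
     (\<Prod>i\<in>{1..n}.
        Eth p (a * X powi (2 * (1 - int i)) * Q powi (2 * int (lam i))) / Eth p (a * X powi (2 * (1 - int i)))
        * Q powi (int (lam i)) * X powi (2 * (int i - 1) * int (lam i)))
   * (\<Prod>i\<in>{1..n}. \<Prod>j\<in>{i<..n}.
        Eth p (X powi (int j - int i) * Q powi (int (lam i) - int (lam j))) / Eth p (X powi (int j - int i))
        * (Eth p (a * X powi (2 - int i - int j) * Q powi (int (lam i) + int (lam j)))
             / Eth p (a * X powi (2 - int i - int j)))
        * (epoch p (a * X powi (3 - int i - int j)) Q (int (lam i) + int (lam j))
           * epoch p (X powi (int j - int i + 1)) Q (int (lam i) - int (lam j)))
        / (epoch p (a * Q * X powi (1 - int i - int j)) Q (int (lam i) + int (lam j))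
           * epoch p (Q * X powi (int j - int i - 1)) Q (int (lam i) - int (lam j))))
   * epochP p ((a * X powi (1 - int n)) # bs @ [Q powi (- int M)]) Q X n (\<lambda>i. int (lam i))
     / epochP p ((Q * X powi (int n - 1)) # map (\<lambda>b. a * Q / b) bs @ [a * Q powi (int M + 1)]) Q X n
         (\<lambda>i. int (lam i))"

text \<open>_{r+1}Omega_r^{(n)}(a; b_1,...,b_{r-3}, Q^{-M}; Q, X), with bs = [b_1,...,b_{r-3}].\<close>
definition Omega ::
  "complex \<Rightarrow> nat \<Rightarrow> nat \<Rightarrow> complex \<Rightarrow> complex list \<Rightarrow> complex \<Rightarrow> complex \<Rightarrow> complex" where
  "Omega p n M a bs Q X = (\<Sum>lam\<in>Lam n M. omega_term p n M a bs Q X lam)"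

definition omega_nondeg ::
  "complex \<Rightarrow> nat \<Rightarrow> nat \<Rightarrow> complex \<Rightarrow> complex list \<Rightarrow> complex \<Rightarrow> complex \<Rightarrow> bool" where
  "omega_nondeg p n M a bs Q X \<longleftrightarrow>
     (\<forall>b\<in>set bs. b \<noteq> 0) \<and>
     (\<forall>i\<in>{1..n}. Eth p (a * X powi (2 * (1 - int i))) \<noteq> 0) \<and>
     (\<forall>i\<in>{1..n}. \<forall>j\<in>{i<..n}. Eth p (X powi (int j - int i)) \<noteq> 0
                         \<and> Eth p (a * X powi (2 - int i - int j)) \<noteq> 0) \<and>
     (\<forall>lam\<in>Lam n M.
        (\<forall>i\<in>{1..n}. \<forall>j\<in>{i<..n}.
           epoch p (a * Q * X powi (1 - int i - int j)) Q (int (lam i) + int (lam j)) \<noteq> 0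
         \<and> epoch p (Q * X powi (int j - int i - 1)) Q (int (lam i) - int (lam j)) \<noteq> 0)
      \<and> epochP p ((Q * X powi (int n - 1)) # map (\<lambda>b. a * Q / b) bs @ [a * Q powi (int M + 1)]) Q X n
           (\<lambda>i. int (lam i)) \<noteq> 0)"

end

(*
  The terms indexed by lam and by its conjugate are both products of values of E at Laurent
  monomials in a, q, x.  The factors involving b_1, ..., b_(r-3) are products over the cells
  of the partition, and the cells of lam and of its conjugate correspond, so these factors
  agree directly.

  The remaining factor is built up cell by cell, always adding a cell at the end of the last
  nonzero row of lam; in the conjugate partition the same cell is a removable corner as well.
  Using E(1/y) = -E(y)/y, the factor by which the term changes equals the corresponding factor
  on the conjugate side: the contributions of the other rows telescope to boundary terms, and
  the cells outside lam above and to the right of the new cell match one by one with their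
  conjugates.

  This needs every factor to be invertible, which holds for generic parameters: E vanishes
  only at integral powers of p, and a real rescaling of a, q, x avoids the countably many
  bad values.  Generic parameters therefore accumulate at every parameter point, and the
  identity extends by continuity to all parameters at which both terms are defined.
*)
theory Submission
  imports Defs
begin

section \<open>The theta function\<close>

definition qpoch_inf :: "complex \<Rightarrow> complex \<Rightarrow> complex" where
  "qpoch_inf p z = (\<Prod>j. 1 - z * p ^ j)"

lemma convergent_prod_qpoch_inf:
  fixes p z :: complex
  assumes "norm p < 1"
  shows "convergent_prod (\<lambda>j. 1 - z * p ^ j)"
proof -
  have "summable (\<lambda>j. norm z * norm p ^ j)"
    using assms by (intro summable_mult summable_geometric) auto
  hence "summable (\<lambda>j. norm ((1 - z * p ^ j) - 1))"
    by (simp add: norm_mult norm_power)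
  thus ?thesis
    by (intro abs_convergent_prod_imp_convergent_prod summable_imp_abs_convergent_prod)
qed

lemma qpoch_inf_head:
  assumes "norm p < 1"
  shows "qpoch_inf p z = (1 - z) * qpoch_inf p (z * p)"
proof -
  have "(\<lambda>j. 1 - (z * p) * p ^ j) has_prod qpoch_inf p (z * p)"
    unfolding qpoch_inf_def by (rule convergent_prod_has_prod[OF convergent_prod_qpoch_inf[OF assms]])
  hence "(\<lambda>j. 1 - z * p ^ Suc j) has_prod qpoch_inf p (z * p)"
    by (simp add: mult_ac)
  hence "(\<lambda>j. 1 - z * p ^ j) has_prod (qpoch_inf p (z * p) * (1 - z * p ^ 0))"
    by (rule has_prod_Suc_imp[where f = "\<lambda>j. 1 - z * p ^ j"])
  from has_prod_unique[OF this] show ?thesis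
    unfolding qpoch_inf_def by (simp add: mult.commute)
qed

lemma Eth_eq_qpoch_inf:
  assumes "norm p < 1"
  shows "Eth p y = qpoch_inf p y * qpoch_inf p (p / y)"
proof -
  have "qpoch_inf p y * qpoch_inf p (p / y) = (\<Prod>j. (1 - y * p ^ j) * (1 - (p / y) * p ^ j))"
    unfolding qpoch_inf_def
    by (rule prodinf_mult[OF convergent_prod_qpoch_inf[OF assms] convergent_prod_qpoch_inf[OF assms]])
  also have "\<dots> = Eth p y"
    unfolding Eth_def by (intro prodinf_cong) (simp add: field_simps)
  finally show ?thesis by simp
qed

lemma Eth_inverse:
  assumes "norm p < 1" and "y \<noteq> 0"
  shows "Eth p (inverse y) = - inverse y * Eth p y"
proof -
  define R where "R = qpoch_inf p (y * p) * qpoch_inf p (p / y)"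
  have "Eth p y = (1 - y) * R"
    using qpoch_inf_head[OF assms(1), of y] by (simp add: Eth_eq_qpoch_inf[OF assms(1)] R_def)
  moreover have "Eth p (inverse y) = (1 - inverse y) * R"
    using qpoch_inf_head[OF assms(1), of "inverse y"]
    by (simp add: Eth_eq_qpoch_inf[OF assms(1)] R_def divide_inverse mult.commute)
  moreover have "1 - inverse y = - inverse y * (1 - y)"
    using assms(2) by (simp add: field_simps)
  ultimately show ?thesis by (simp only: mult.assoc)
qed

lemma continuous_on_qpoch_inf:
  assumes "norm p < 1"
  shows "continuous_on (cball 0 R) (qpoch_inf p)"
proof -
  let ?f = "\<lambda>n z. 1 - z * p ^ n"
  have "uniformly_convergent_on (cball 0 R) (\<lambda>N z. \<Prod>n<N. ?f n z)"
  proof (rule uniformly_convergent_on_prod')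
    show "uniformly_convergent_on (cball 0 R) (\<lambda>N z. \<Sum>n<N. norm (?f n z - 1))"
    proof (rule Weierstrass_m_test'[where M="\<lambda>n. R * norm p ^ n"])
      show "summable (\<lambda>n. R * norm p ^ n)"
        using assms by (intro summable_mult summable_geometric) auto
    qed (simp add: norm_mult norm_power mult_right_mono)
  qed (auto intro!: continuous_intros)
  hence "uniform_limit (cball 0 R) (\<lambda>N z. \<Prod>n<N. ?f n z) (\<lambda>z. lim (\<lambda>N. \<Prod>n<N. ?f n z)) sequentially"
    using uniformly_convergent_uniform_limit_iff by blast
  hence "continuous_on (cball 0 R) (\<lambda>z. lim (\<lambda>N. \<Prod>n<N. ?f n z))"
    by (rule uniform_limit_theorem[rotated]) (auto intro!: always_eventually continuous_intros)
  moreover have "lim (\<lambda>N. \<Prod>n<N. ?f n z) = qpoch_inf p z" for z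
    unfolding qpoch_inf_def
    using convergent_prod_LIMSEQ[OF convergent_prod_qpoch_inf[OF assms]] LIMSEQ_lessThan_iff_atMost
    by (blast intro: limI)
  ultimately show ?thesis by simp
qed

lemma isCont_qpoch_inf:
  assumes "norm p < 1"
  shows "isCont (qpoch_inf p) z"
  using continuous_on_qpoch_inf[OF assms, of "norm z + 1"]
  by (rule continuous_on_interior) simp

lemma Eth_tendsto:
  assumes "norm p < 1" and "(g \<longlongrightarrow> y) F" and "y \<noteq> 0"
  shows "((\<lambda>t. Eth p (g t)) \<longlongrightarrow> Eth p y) F"
  unfolding Eth_eq_qpoch_inf[OF assms(1)]
  using assms by (intro tendsto_mult isCont_tendsto_compose[OF isCont_qpoch_inf] tendsto_intros)

lemma Eth_eq_0_imp_power_int: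
  assumes p: "norm p < 1" and "y \<noteq> 0" and "Eth p y = 0"
  obtains k :: int where "y = p powi k"
proof -
  have qpoch_inf_0: "\<exists>j. z * p ^ j = 1" if "qpoch_inf p z = 0" for z
    using prodinf_nonzero[OF convergent_prod_qpoch_inf[OF p, of z]] that
    unfolding qpoch_inf_def by fastforce
  from assms have "qpoch_inf p y = 0 \<or> qpoch_inf p (p / y) = 0"
    by (simp add: Eth_eq_qpoch_inf)
  thus ?thesis
  proof
    assume "qpoch_inf p y = 0"
    then obtain j where "y * p ^ j = 1" using qpoch_inf_0 by blast
    hence "inverse (p ^ j) = y"
      by (intro inverse_unique) (simp add: mult.commute)
    hence "y = p powi (- int j)"
      by (simp add: power_int_minus)
    thus ?thesis by (rule that)
  next
    assume "qpoch_inf p (p / y) = 0"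
    then obtain j where "p / y * p ^ j = 1" using qpoch_inf_0 by blast
    hence "y = p ^ Suc j" using assms(2) by (simp add: field_simps)
    hence "y = p powi int (Suc j)" by (simp only: power_int_of_nat)
    thus ?thesis by (rule that)
  qed
qed

lemma prod_eq_prod_times_if_one_changed:
  assumes "finite A" "i \<in> A" "\<And>k. k \<in> A \<Longrightarrow> k \<noteq> i \<Longrightarrow> f k = g k" "f i = g i * r"
  shows "prod f A = prod g A * (r :: 'a :: comm_monoid_mult)"
proof -
  have "prod f A = f i * prod f (A - {i})" by (rule prod.remove) fact+
  also have "prod f (A - {i}) = prod g (A - {i})" using assms(3) by (intro prod.cong) auto
  finally show ?thesis using prod.remove[OF assms(1,2), of g] assms(4) by (simp add: mult_ac)
qed

lemma prod_telescope_down: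
  fixes f :: "'a \<Rightarrow> nat \<Rightarrow> 'b :: field"
  assumes "\<And>j. j \<in> A \<Longrightarrow> l j \<le> N" and "\<And>j d. j \<in> A \<Longrightarrow> l j \<le> d \<Longrightarrow> d \<le> N \<Longrightarrow> f j d \<noteq> 0"
  shows "(\<Prod>j\<in>A. f j (l j)) = (\<Prod>j\<in>A. f j N) * (\<Prod>j\<in>A. \<Prod>d\<in>{l j<..N}. f j (d - 1) / f j d)"
proof -
  have "f j u = f j N' * (\<Prod>d\<in>{u<..N'}. f j (d - 1) / f j d)"
    if "u \<le> N'" "\<And>d. u \<le> d \<Longrightarrow> d \<le> N' \<Longrightarrow> f j d \<noteq> 0" for j u N'
    using that
  proof (induction N')
    case (Suc N')
    show ?case
    proof (cases "u = Suc N'")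
      case False
      hence "u \<le> N'" "{u<..Suc N'} = insert (Suc N') {u<..N'}" using Suc.prems by auto
      thus ?thesis using Suc by simp
    qed simp
  qed simp
  hence "(\<Prod>j\<in>A. f j (l j)) = (\<Prod>j\<in>A. f j N * (\<Prod>d\<in>{l j<..N}. f j (d - 1) / f j d))"
    using assms by (intro prod.cong) auto
  thus ?thesis by (simp add: prod.distrib)
qed

section \<open>Conjugate partitions\<close>

lemma LamD:
  assumes "lam \<in> Lam n N"
  shows "lam i \<le> N" and "1 \<le> i \<Longrightarrow> i \<le> j \<Longrightarrow> j \<le> n \<Longrightarrow> lam j \<le> lam i"
    and "i \<notin> {1..n} \<Longrightarrow> lam i = 0"
  using assms unfolding Lam_def by auto

lemma conjp_le: "conjp n N lam k \<le> n"
proof -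
  have "card {i \<in> {1..n}. k \<le> lam i} \<le> card {1..n}" by (intro card_mono) auto
  thus ?thesis by (simp add: conjp_def)
qed

lemma le_lam_iff_le_conjp:
  assumes L: "lam \<in> Lam n N" and j: "j \<in> {1..n}" and k: "k \<in> {1..N}"
  shows "k \<le> lam j \<longleftrightarrow> j \<le> conjp n N lam k"
proof -
  let ?S = "{i \<in> {1..n}. k \<le> lam i}"
  have card_S: "conjp n N lam k = card ?S" using k by (simp add: conjp_def)
  show ?thesis
  proof
    assume "k \<le> lam j"
    hence "{1..j} \<subseteq> ?S" using LamD(2)[OF L] j by (auto intro: order_trans)
    hence "card {1..j} \<le> card ?S" by (intro card_mono) auto
    thus "j \<le> conjp n N lam k" by (simp add: card_S)
  next
    assume le: "j \<le> conjp n N lam k"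
    show "k \<le> lam j"
    proof (rule ccontr)
      assume "\<not> k \<le> lam j"
      have "?S \<subseteq> {1..<j}"
      proof
        fix i assume i: "i \<in> ?S"
        have "\<not> j \<le> i"
        proof
          assume "j \<le> i"
          hence "lam i \<le> lam j" using LamD(2)[OF L, of j i] i j by auto
          thus False using i \<open>\<not> k \<le> lam j\<close> by auto
        qed
        thus "i \<in> {1..<j}" using i by auto
      qed
      hence "card ?S \<le> card {1..<j}" by (intro card_mono) auto
      hence "card ?S < j" using j by simp arith
      thus False using le card_S by simp
    qed
  qed
qed

lemma conjp_in_Lam:
  assumes "lam \<in> Lam n N"
  shows "conjp n N lam \<in> Lam N n"
  unfolding Lam_def
proof (intro CollectI conjI allI impI)
  fix i j assume "1 \<le> i" "i \<le> j" "j \<le> N"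
  thus "conjp n N lam j \<le> conjp n N lam i"
    unfolding conjp_def by (auto intro!: card_mono)
next
  fix i show "conjp n N lam i \<le> n" by (rule conjp_le)
next
  fix i assume "i \<notin> {1..N}"
  thus "conjp n N lam i = 0" unfolding conjp_def by (rule if_not_P)
qed

lemma conjp_conjp:
  assumes L: "lam \<in> Lam n N"
  shows "conjp N n (conjp n N lam) = lam"
proof
  fix j
  show "conjp N n (conjp n N lam) j = lam j"
  proof (cases "j \<in> {1..n}")
    case True
    have "{k \<in> {1..N}. j \<le> conjp n N lam k} = {1..lam j}"
    proof (rule set_eqI)
      fix k
      show "k \<in> {k \<in> {1..N}. j \<le> conjp n N lam k} \<longleftrightarrow> k \<in> {1..lam j}"
        using le_lam_iff_le_conjp[OF L True, of k] LamD(1)[OF L, of j] by auto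
    qed
    thus ?thesis using True by (simp add: conjp_def)
  next
    case False
    have "conjp N n (conjp n N lam) j = 0" unfolding conjp_def by (rule if_not_P) (rule False)
    thus ?thesis using LamD(3)[OF L False] by simp
  qed
qed

lemma bij_betw_conjp: "bij_betw (conjp n N) (Lam n N) (Lam N n)"
  by (rule bij_betw_byWitness[where f' = "conjp N n"]) (auto simp: conjp_conjp conjp_in_Lam)

lemma prod_cells_conjp:
  assumes L: "lam \<in> Lam n N"
  shows "(\<Prod>j\<in>{1..n}. \<Prod>c\<in>{..<lam j}. F j c)
       = (\<Prod>k\<in>{1..N}. \<Prod>m\<in>{..<conjp n N lam k}. F (Suc m) (k - 1))"
proof -
  have cell: "j - 1 < conjp n N lam k \<longleftrightarrow> k - 1 < lam j"
    if "j \<in> {1..n}" "k \<in> {1..N}" for j k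
    using le_lam_iff_le_conjp[OF L that] that by auto
  have "(\<Prod>j\<in>{1..n}. \<Prod>c\<in>{..<lam j}. F j c) = (\<Prod>(j,c)\<in>Sigma {1..n} (\<lambda>j. {..<lam j}). F j c)"
    by (rule prod.Sigma) auto
  also have "\<dots> = (\<Prod>(k,m)\<in>Sigma {1..N} (\<lambda>k. {..<conjp n N lam k}). F (Suc m) (k - 1))"
  proof (rule prod.reindex_bij_witness[where i = "\<lambda>(k,m). (Suc m, k - 1)" and j = "\<lambda>(j,c). (Suc c, j - 1)"])
    fix a assume "a \<in> Sigma {1..n} (\<lambda>j. {..<lam j})"
    moreover from this have "Suc (snd a) \<le> N" using LamD(1)[OF L, of "fst a"] by auto
    ultimately show "(\<lambda>(j,c). (Suc c, j - 1)) a \<in> Sigma {1..N} (\<lambda>k. {..<conjp n N lam k})"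
      using cell[of "fst a" "Suc (snd a)"] by auto
  next
    fix b assume "b \<in> Sigma {1..N} (\<lambda>k. {..<conjp n N lam k})"
    moreover from this have "Suc (snd b) \<le> n" using conjp_le[of n N lam "fst b"] by auto
    ultimately show "(\<lambda>(k,m). (Suc m, k - 1)) b \<in> Sigma {1..n} (\<lambda>j. {..<lam j})"
      using cell[of "Suc (snd b)" "fst b"] by auto
  qed auto
  also have "\<dots> = (\<Prod>k\<in>{1..N}. \<Prod>m\<in>{..<conjp n N lam k}. F (Suc m) (k - 1))"
    by (rule prod.Sigma[symmetric]) auto
  finally show ?thesis .
qed

lemma prod_noncells_conjp:
  assumes L: "lam \<in> Lam n N" and i: "i \<le> n" and c: "\<forall>j\<in>{1..<i}. c \<le> lam j"
  shows "(\<Prod>j\<in>{1..<i}. \<Prod>d\<in>{lam j<..N}. F j d)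
       = (\<Prod>k\<in>{c<..N}. \<Prod>m\<in>{conjp n N lam k<..i - 1}. F m k)"
proof -
  have "(\<Prod>j\<in>{1..<i}. \<Prod>d\<in>{lam j<..N}. F j d) = (\<Prod>(j,d)\<in>Sigma {1..<i} (\<lambda>j. {lam j<..N}). F j d)"
    by (rule prod.Sigma) auto
  also have "\<dots> = (\<Prod>(k,m)\<in>Sigma {c<..N} (\<lambda>k. {conjp n N lam k<..i - 1}). F m k)"
  proof (rule prod.reindex_bij_witness[where i = "\<lambda>(k,m). (m,k)" and j = "\<lambda>(j,d). (d,j)"])
    fix a assume a: "a \<in> Sigma {1..<i} (\<lambda>j. {lam j<..N})"
    hence "c < snd a" using c by force
    thus "(\<lambda>(j,d). (d,j)) a \<in> Sigma {c<..N} (\<lambda>k. {conjp n N lam k<..i - 1})"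
      using a le_lam_iff_le_conjp[OF L, of "fst a" "snd a"] i by auto
  next
    fix b assume b: "b \<in> Sigma {c<..N} (\<lambda>k. {conjp n N lam k<..i - 1})"
    hence "snd b \<in> {1..n}" "fst b \<in> {1..N}" using i by auto
    from le_lam_iff_le_conjp[OF L this] b
    show "(\<lambda>(k,m). (m,k)) b \<in> Sigma {1..<i} (\<lambda>j. {lam j<..N})" by auto
  qed auto
  also have "\<dots> = (\<Prod>k\<in>{c<..N}. \<Prod>m\<in>{conjp n N lam k<..i - 1}. F m k)"
    by (rule prod.Sigma[symmetric]) auto
  finally show ?thesis .
qed

lemma Lam_remove_last_cell:
  assumes L: "lam \<in> Lam n N" and i: "i \<in> {1..n}" and u: "lam i = Suc u"
    and zeros: "\<forall>j\<in>{i<..n}. lam j = 0"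
  shows "lam(i := u) \<in> Lam n N"
  unfolding Lam_def
proof (intro CollectI conjI allI impI)
  fix k j assume "1 \<le> k" "k \<le> j" "j \<le> n"
  thus "(lam(i := u)) j \<le> (lam(i := u)) k"
    using LamD(2)[OF L, of k j] LamD(2)[OF L, of k i] zeros i u
    by (cases "j = i"; cases "k = i") auto
qed (use LamD[OF L] LamD(1)[OF L, of i] i u in auto)

lemma Lam_last_cell_induct [consumes 1, case_names zero last_cell]:
  assumes L: "lam \<in> Lam n N"
    and zero: "P (\<lambda>_. 0)"
    and last_cell: "\<And>lam i u. lam \<in> Lam n N \<Longrightarrow> i \<in> {1..n} \<Longrightarrow> lam i = Suc u
      \<Longrightarrow> (\<forall>j\<in>{i<..n}. lam j = 0) \<Longrightarrow> P (lam(i := u)) \<Longrightarrow> P lam"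
  shows "P lam"
  using L
proof (induction "sum lam {1..n}" arbitrary: lam rule: less_induct)
  case less
  show ?case
  proof (cases "\<exists>i\<in>{1..n}. 0 < lam i")
    case False
    hence "lam = (\<lambda>_. 0)" using LamD(3)[OF less.prems] by fastforce
    thus ?thesis using zero by simp
  next
    case True
    define S where "S = {i \<in> {1..n}. 0 < lam i}"
    define i where "i = Max S"
    have S: "finite S" "S \<noteq> {}" using True by (auto simp: S_def)
    have i: "i \<in> {1..n}" "0 < lam i" using Max_in[OF S] unfolding i_def S_def by auto
    then obtain u where u: "lam i = Suc u" using gr0_implies_Suc by blast
    have zeros: "\<forall>j\<in>{i<..n}. lam j = 0"
    proof (rule ccontr)
      assume "\<not> (\<forall>j\<in>{i<..n}. lam j = 0)"
      then obtain j where "j \<in> {i<..n}" "j \<in> S" by (auto simp: S_def)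
      thus False using Max_ge[OF S(1), of j] unfolding i_def by auto
    qed
    have "sum (lam(i := u)) {1..n} < sum lam {1..n}"
      using i u by (intro sum_strict_mono_ex1) auto
    from less.hyps[OF this Lam_remove_last_cell[OF less.prems i(1) u zeros]]
    show ?thesis by (rule last_cell[OF less.prems i(1) u zeros])
  qed
qed

lemma conjp_last_cell:
  assumes L: "lam \<in> Lam n N" and i: "i \<in> {1..n}" and u: "lam i = Suc u"
    and zeros: "\<forall>j\<in>{i<..n}. lam j = 0"
  shows "\<And>k. k \<in> {1..Suc u} \<Longrightarrow> conjp n N lam k = i"
    and "\<And>k. k \<in> {Suc u<..N} \<Longrightarrow> conjp n N lam k < i"
    and "conjp n N (lam(i := u)) = (conjp n N lam)(Suc u := i - 1)"
proof -
  have uN: "Suc u \<le> N" using LamD(1)[OF L, of i] u by simp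
  show col: "conjp n N lam k = i" if k: "k \<in> {1..Suc u}" for k
  proof (rule antisym)
    have "\<not> Suc i \<le> conjp n N lam k" if "Suc i \<le> n"
      using le_lam_iff_le_conjp[OF L, of "Suc i" k] zeros that k uN i by auto
    thus "conjp n N lam k \<le> i" using conjp_le[of n N lam k] by fastforce
    show "i \<le> conjp n N lam k" using le_lam_iff_le_conjp[OF L i, of k] k u uN by auto
  qed
  show "conjp n N lam k < i" if "k \<in> {Suc u<..N}" for k
    using le_lam_iff_le_conjp[OF L i, of k] that u by auto
  show "conjp n N (lam(i := u)) = (conjp n N lam)(Suc u := i - 1)"
  proof
    fix k
    show "conjp n N (lam(i := u)) k = ((conjp n N lam)(Suc u := i - 1)) k"
    proof (cases "k = Suc u")
      case True
      have "{j \<in> {1..n}. k \<le> (lam(i := u)) j} = {j \<in> {1..n}. k \<le> lam j} - {i}"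
        using True u by auto
      moreover have "i \<in> {j \<in> {1..n}. k \<le> lam j}" using True u i by auto
      moreover have "card {j \<in> {1..n}. k \<le> lam j} = i"
        using col[of k] True uN by (simp add: conjp_def)
      ultimately show ?thesis using True uN by (simp add: conjp_def)
    next
      case False
      hence "{j \<in> {1..n}. k \<le> (lam(i := u)) j} = {j \<in> {1..n}. k \<le> lam j}"
        using u by auto
      thus ?thesis using False by (simp add: conjp_def)
    qed
  qed
qed

section \<open>The terms in monomial form\<close>

text \<open>Every argument of \<open>E\<close> occurring in a term is a Laurent monomial \<open>a\<^sup>g Q\<^sup>b X\<^sup>c\<close>
  with \<open>\<bar>g\<bar> \<le> 1\<close>; \<open>Emon\<close> and \<open>epmon\<close> are \<open>E\<close> and \<open>(y;Q)\<^sub>u\<close> at such a monomial.\<close>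

definition mon :: "complex \<Rightarrow> complex \<Rightarrow> complex \<Rightarrow> int \<Rightarrow> int \<Rightarrow> int \<Rightarrow> complex" where
  "mon a Q X g b c = a powi g * Q powi b * X powi c"

definition Emon :: "complex \<Rightarrow> complex \<Rightarrow> complex \<Rightarrow> complex \<Rightarrow> int \<Rightarrow> int \<Rightarrow> int \<Rightarrow> complex" where
  "Emon p a Q X g b c = Eth p (mon a Q X g b c)"

definition epmon ::
  "complex \<Rightarrow> complex \<Rightarrow> complex \<Rightarrow> complex \<Rightarrow> int \<Rightarrow> int \<Rightarrow> int \<Rightarrow> nat \<Rightarrow> complex" where
  "epmon p a Q X g b c u = (\<Prod>k<u. Emon p a Q X g (b + int k) c)"

lemma epmon_Suc: "epmon p a Q X g b c (Suc u) = epmon p a Q X g b c u * Emon p a Q X g (b + int u) c"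
  unfolding epmon_def by simp

definition row_factor ::
  "complex \<Rightarrow> nat \<Rightarrow> nat \<Rightarrow> complex \<Rightarrow> complex \<Rightarrow> complex \<Rightarrow> nat \<Rightarrow> nat \<Rightarrow> complex" where
  "row_factor p n M a Q X i u =
     Emon p a Q X 1 (2 * int u) (2 * (1 - int i)) / Emon p a Q X 1 0 (2 * (1 - int i))
     * mon a Q X 0 (int u) 0 * mon a Q X 0 0 (2 * (int i - 1) * int u)
     * (epmon p a Q X 1 0 (1 - int n + (1 - int i)) u * epmon p a Q X 0 (- int M) (1 - int i) u)
     / (epmon p a Q X 0 1 (int n - 1 + (1 - int i)) u * epmon p a Q X 1 (int M + 1) (1 - int i) u)"

definition pair_factor ::
  "complex \<Rightarrow> complex \<Rightarrow> complex \<Rightarrow> complex \<Rightarrow> nat \<Rightarrow> nat \<Rightarrow> nat \<Rightarrow> nat \<Rightarrow> complex" where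
  "pair_factor p a Q X i j u v =
     Emon p a Q X 0 (int u - int v) (int j - int i) / Emon p a Q X 0 0 (int j - int i)
     * (Emon p a Q X 1 (int u + int v) (2 - int i - int j) / Emon p a Q X 1 0 (2 - int i - int j))
     * (epmon p a Q X 1 0 (3 - int i - int j) (u + v) * epmon p a Q X 0 0 (int j - int i + 1) (u - v))
     / (epmon p a Q X 1 1 (1 - int i - int j) (u + v) * epmon p a Q X 0 1 (int j - int i - 1) (u - v))"

definition core_term ::
  "complex \<Rightarrow> nat \<Rightarrow> nat \<Rightarrow> complex \<Rightarrow> complex \<Rightarrow> complex \<Rightarrow> (nat \<Rightarrow> nat) \<Rightarrow> complex" where
  "core_term p n M a Q X lam = (\<Prod>i\<in>{1..n}. row_factor p n M a Q X i (lam i))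
      * (\<Prod>i\<in>{1..n}. \<Prod>j\<in>{i<..n}. pair_factor p a Q X i j (lam i) (lam j))"

context
  fixes a Q X :: complex
  assumes nz: "a \<noteq> 0" "Q \<noteq> 0" "X \<noteq> 0"
begin

lemma mon_mult: "mon a Q X g b c * mon a Q X g' b' c' = mon a Q X (g + g') (b + b') (c + c')"
  using nz by (simp add: mon_def power_int_add mult_ac)

lemma mon_mult_left: "mon a Q X g b c * (mon a Q X g' b' c' * z) = mon a Q X (g + g') (b + b') (c + c') * z"
  by (simp add: mon_mult[symmetric] mult.assoc)

lemma mon_nonzero: "mon a Q X g b c \<noteq> 0"
  using nz by (simp add: mon_def)

lemma mon_inverse: "inverse (mon a Q X g b c) = mon a Q X (- g) (- b) (- c)"
  using nz by (simp add: mon_def power_int_minus)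

lemma epoch_mon: "epoch p (mon a Q X g b c) Q (int u) = epmon p a Q X g b c u"
proof -
  have "mon a Q X g b c * Q ^ k = mon a Q X g (b + int k) c" for k
    using nz by (simp add: mon_def power_int_add mult_ac)
  thus ?thesis by (simp add: epoch_def epmon_def Emon_def)
qed

lemma epoch_mon_add: "epoch p (mon a Q X g b c) Q (int u + int v) = epmon p a Q X g b c (u + v)"
  using epoch_mon[of p g b c "u + v"] by simp

lemma epoch_mon_diff:
  "v \<le> u \<Longrightarrow> epoch p (mon a Q X g b c) Q (int u - int v) = epmon p a Q X g b c (u - v)"
  using epoch_mon[of p g b c "u - v"] by (simp add: of_nat_diff)

lemma X_powi_eq_mon: "X powi k = mon a Q X 0 0 k"
  by (simp add: mon_def)

lemma Q_powi_eq_mon: "Q powi k = mon a Q X 0 k 0"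
  by (simp add: mon_def)

lemma a_times_mon: "a * mon a Q X g b c = mon a Q X (g + 1) b c"
  using nz by (simp add: mon_def power_int_add mult_ac)

lemma Q_times_mon: "Q * mon a Q X g b c = mon a Q X g (b + 1) c"
  using nz by (simp add: mon_def power_int_add mult_ac)

lemmas mon_normalize = X_powi_eq_mon Q_powi_eq_mon a_times_mon Q_times_mon mult.assoc[of a Q]
  mon_mult add_0 add_0_right epoch_mon epoch_mon_add Emon_def[symmetric]

end

lemma pair_factor_eq:
  assumes nz: "a \<noteq> 0" "Q \<noteq> 0" "X \<noteq> 0" and "v \<le> u"
  shows "pair_factor p a Q X i j u v =
        Eth p (X powi (int j - int i) * Q powi (int u - int v)) / Eth p (X powi (int j - int i))
        * (Eth p (a * X powi (2 - int i - int j) * Q powi (int u + int v))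
             / Eth p (a * X powi (2 - int i - int j)))
        * (epoch p (a * X powi (3 - int i - int j)) Q (int u + int v)
           * epoch p (X powi (int j - int i + 1)) Q (int u - int v))
        / (epoch p (a * Q * X powi (1 - int i - int j)) Q (int u + int v)
           * epoch p (Q * X powi (int j - int i - 1)) Q (int u - int v))"
  unfolding pair_factor_def by (simp only: mon_normalize[OF nz] epoch_mon_diff[OF nz assms(4)])

lemma prod_row_factor_eq:
  assumes nz: "a \<noteq> 0" "Q \<noteq> 0" "X \<noteq> 0"
  shows "(\<Prod>i\<in>{1..n}. row_factor p n M a Q X i (lam i)) =
      (\<Prod>i\<in>{1..n}.
        Eth p (a * X powi (2 * (1 - int i)) * Q powi (2 * int (lam i))) / Eth p (a * X powi (2 * (1 - int i)))
        * Q powi (int (lam i)) * X powi (2 * (int i - 1) * int (lam i)))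
      * (epochP p [a * X powi (1 - int n), Q powi (- int M)] Q X n (\<lambda>i. int (lam i))
        / epochP p [Q * X powi (int n - 1), a * Q powi (int M + 1)] Q X n (\<lambda>i. int (lam i)))"
proof -
  have "epochP p [a * X powi (1 - int n), Q powi (- int M)] Q X n (\<lambda>i. int (lam i))
      = (\<Prod>i\<in>{1..n}. epmon p a Q X 1 0 (1 - int n + (1 - int i)) (lam i)
                     * epmon p a Q X 0 (- int M) (1 - int i) (lam i))"
    unfolding epochP_def
    by (simp only: mon_normalize[OF nz] prod_list.Cons prod_list.Nil list.map mult_1_right prod.distrib)
  moreover have "epochP p [Q * X powi (int n - 1), a * Q powi (int M + 1)] Q X n (\<lambda>i. int (lam i))
      = (\<Prod>i\<in>{1..n}. epmon p a Q X 0 1 (int n - 1 + (1 - int i)) (lam i)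
                     * epmon p a Q X 1 (int M + 1) (1 - int i) (lam i))"
    unfolding epochP_def
    by (simp only: mon_normalize[OF nz] prod_list.Cons prod_list.Nil list.map mult_1_right prod.distrib)
  ultimately show ?thesis
    unfolding row_factor_def
    by (simp only: mon_normalize[OF nz] prod.distrib[symmetric] prod_dividef[symmetric])
      (simp add: divide_inverse mult_ac)
qed

lemma omega_term_Nil_eq_core_term:
  assumes nz: "a \<noteq> 0" "Q \<noteq> 0" "X \<noteq> 0" and L: "lam \<in> Lam n M"
  shows "omega_term p n M a [] Q X lam = core_term p n M a Q X lam"
proof -
  have pairs: "(\<Prod>i\<in>{1..n}. \<Prod>j\<in>{i<..n}. pair_factor p a Q X i j (lam i) (lam j)) =
      (\<Prod>i\<in>{1..n}. \<Prod>j\<in>{i<..n}.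
        Eth p (X powi (int j - int i) * Q powi (int (lam i) - int (lam j))) / Eth p (X powi (int j - int i))
        * (Eth p (a * X powi (2 - int i - int j) * Q powi (int (lam i) + int (lam j)))
             / Eth p (a * X powi (2 - int i - int j)))
        * (epoch p (a * X powi (3 - int i - int j)) Q (int (lam i) + int (lam j))
           * epoch p (X powi (int j - int i + 1)) Q (int (lam i) - int (lam j)))
        / (epoch p (a * Q * X powi (1 - int i - int j)) Q (int (lam i) + int (lam j))
           * epoch p (Q * X powi (int j - int i - 1)) Q (int (lam i) - int (lam j))))"
    using LamD(2)[OF L] by (intro prod.cong refl pair_factor_eq[OF nz]) auto
  show ?thesis
    unfolding omega_term_def core_term_def append_Nil list.map(1) prod_row_factor_eq[OF nz] pairs
    by (simp add: mult_ac)
qed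

section \<open>Adding a cell\<close>

definition generic :: "complex \<Rightarrow> complex \<Rightarrow> complex \<Rightarrow> complex \<Rightarrow> bool" where
  "generic p a Q X \<longleftrightarrow> (\<forall>g b c. (g, b, c) \<noteq> (0, 0, 0) \<longrightarrow> Emon p a Q X g b c \<noteq> 0)"

context
  fixes p a Q X :: complex
  assumes generic: "generic p a Q X"
begin

lemma Emon1_nonzero: "Emon p a Q X 1 b c \<noteq> 0"
  using generic unfolding generic_def by force

lemma Emon0_nonzero: "b \<noteq> 0 \<or> c \<noteq> 0 \<Longrightarrow> Emon p a Q X 0 b c \<noteq> 0"
  using generic unfolding generic_def by force

lemma epmon1_nonzero: "epmon p a Q X 1 b c u \<noteq> 0"
  unfolding epmon_def using Emon1_nonzero by (simp add: prod_zero_iff)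

lemma epmon0_nonzero: "c \<noteq> 0 \<or> 0 < b \<or> b + int u \<le> 0 \<Longrightarrow> epmon p a Q X 0 b c u \<noteq> 0"
  unfolding epmon_def using Emon0_nonzero by (auto simp: prod_zero_iff)

lemmas generic_nonzero = Emon1_nonzero Emon0_nonzero epmon1_nonzero epmon0_nonzero

end

definition row_ratio ::
  "complex \<Rightarrow> nat \<Rightarrow> nat \<Rightarrow> complex \<Rightarrow> complex \<Rightarrow> complex \<Rightarrow> int \<Rightarrow> int \<Rightarrow> complex" where
  "row_ratio p n M a Q X I C =
     Emon p a Q X 1 (2 * C) (2 - 2 * I) / Emon p a Q X 1 (2 * C - 2) (2 - 2 * I) * mon a Q X 0 1 (2 * I - 2)
     * (Emon p a Q X 1 (C - 1) (2 - int n - I) * Emon p a Q X 0 (C - 1 - int M) (1 - I))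
     / (Emon p a Q X 0 C (int n - I) * Emon p a Q X 1 (int M + C) (1 - I))"

definition pair_ratio_fst ::
  "complex \<Rightarrow> complex \<Rightarrow> complex \<Rightarrow> complex \<Rightarrow> int \<Rightarrow> int \<Rightarrow> int \<Rightarrow> int \<Rightarrow> complex" where
  "pair_ratio_fst p a Q X I C J V =
     Emon p a Q X 0 (C - V) (J - I) * Emon p a Q X 0 (C - 1 - V) (J - I + 1)
     * Emon p a Q X 1 (C + V) (2 - I - J) * Emon p a Q X 1 (C + V - 1) (3 - I - J)
     / (Emon p a Q X 0 (C - 1 - V) (J - I) * Emon p a Q X 0 (C - V) (J - I - 1)
        * Emon p a Q X 1 (C + V - 1) (2 - I - J) * Emon p a Q X 1 (C + V) (1 - I - J))"

definition pair_ratio_snd ::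
  "complex \<Rightarrow> complex \<Rightarrow> complex \<Rightarrow> complex \<Rightarrow> int \<Rightarrow> int \<Rightarrow> int \<Rightarrow> int \<Rightarrow> complex" where
  "pair_ratio_snd p a Q X I C J U =
     Emon p a Q X 0 (U - C) (I - J) * Emon p a Q X 0 (U - C + 1) (I - J - 1)
     * Emon p a Q X 1 (U + C) (2 - I - J) * Emon p a Q X 1 (U + C - 1) (3 - I - J)
     / (Emon p a Q X 0 (U - C + 1) (I - J) * Emon p a Q X 0 (U - C) (I - J + 1)
        * Emon p a Q X 1 (U + C - 1) (2 - I - J) * Emon p a Q X 1 (U + C) (1 - I - J))"

lemma pair_ratio_fst_nonzero:
  assumes g: "generic p a Q X" and "I < J" and "V < C"
  shows "pair_ratio_fst p a Q X I C J V \<noteq> 0"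
  unfolding pair_ratio_fst_def using assms by (simp add: generic_nonzero[OF g])

lemma pair_ratio_snd_nonzero:
  assumes g: "generic p a Q X" and "J < I" and "C \<le> U"
  shows "pair_ratio_snd p a Q X I C J U \<noteq> 0"
  unfolding pair_ratio_snd_def using assms by (simp add: generic_nonzero[OF g])

lemma row_factor_Suc:
  assumes nz: "a \<noteq> 0" "Q \<noteq> 0" "X \<noteq> 0" and g: "generic p a Q X" and "Suc u \<le> M"
  shows "row_factor p n M a Q X i (Suc u)
       = row_factor p n M a Q X i u * row_ratio p n M a Q X (int i) (int (Suc u))"
  unfolding row_factor_def row_ratio_def epmon_Suc using assms(5)
  by (simp add: field_simps generic_nonzero[OF g] mon_nonzero[OF nz] mon_mult[OF nz])

lemma pair_factor_Suc_fst:
  assumes g: "generic p a Q X" and "i < j" and "v \<le> u"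
  shows "pair_factor p a Q X i j (Suc u) v
       = pair_factor p a Q X i j u v * pair_ratio_fst p a Q X (int i) (int (Suc u)) (int j) (int v)"
proof -
  have e: "Suc u + v = Suc (u + v)" "Suc u - v = Suc (u - v)" using assms(3) by auto
  show ?thesis
    unfolding pair_factor_def pair_ratio_fst_def e epmon_Suc using assms(2,3)
    by (simp add: field_simps generic_nonzero[OF g] of_nat_diff)
qed

lemma pair_factor_Suc_snd:
  assumes g: "generic p a Q X" and "j < i" and "Suc w \<le> u"
  shows "pair_factor p a Q X j i u (Suc w)
       = pair_factor p a Q X j i u w * pair_ratio_snd p a Q X (int i) (int (Suc w)) (int j) (int u)"
proof -
  have e: "u + Suc w = Suc (u + w)" "u - w = Suc (u - Suc w)" using assms(3) by auto
  show ?thesis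
    unfolding pair_factor_def pair_ratio_snd_def e epmon_Suc using assms(2,3)
    by (simp add: field_simps generic_nonzero[OF g] of_nat_diff)
qed

definition cell_ratio ::
  "complex \<Rightarrow> nat \<Rightarrow> nat \<Rightarrow> complex \<Rightarrow> complex \<Rightarrow> complex \<Rightarrow> (nat \<Rightarrow> nat) \<Rightarrow> nat \<Rightarrow> nat \<Rightarrow> complex"
where
  "cell_ratio p n M a Q X lam i c = row_ratio p n M a Q X (int i) (int c)
      * (\<Prod>j\<in>{i<..n}. pair_ratio_fst p a Q X (int i) (int c) (int j) (int (lam j)))
      * (\<Prod>j\<in>{1..<i}. pair_ratio_snd p a Q X (int i) (int c) (int j) (int (lam j)))"

lemma core_term_cell_ratio:
  assumes nz: "a \<noteq> 0" "Q \<noteq> 0" "X \<noteq> 0" and g: "generic p a Q X"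
    and i: "i \<in> {1..n}" and li: "lam i = Suc u" and uM: "Suc u \<le> M"
    and below: "\<And>j. j \<in> {i<..n} \<Longrightarrow> lam j \<le> u"
    and above: "\<And>j. j \<in> {1..<i} \<Longrightarrow> Suc u \<le> lam j"
  shows "core_term p n M a Q X lam
       = core_term p n M a Q X (lam(i := u)) * cell_ratio p n M a Q X lam i (Suc u)"
proof -
  define nu where "nu = lam(i := u)"
  define RF where "RF = (\<Prod>j\<in>{i<..n}. pair_ratio_fst p a Q X (int i) (int (Suc u)) (int j) (int (lam j)))"
  define RS where "RS j = pair_ratio_snd p a Q X (int i) (int (Suc u)) (int j) (int (lam j))" for j
  define G where "G lm k = (\<Prod>l\<in>{k<..n}. pair_factor p a Q X k l (lm k) (lm l))" for lm k
  define R where "R k = (if k = i then RF else if k < i then RS k else 1)" for k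
  have rows: "(\<Prod>k\<in>{1..n}. row_factor p n M a Q X k (lam k))
      = (\<Prod>k\<in>{1..n}. row_factor p n M a Q X k (nu k)) * row_ratio p n M a Q X (int i) (int (Suc u))"
    by (rule prod_eq_prod_times_if_one_changed[OF _ i])
      (auto simp: nu_def li row_factor_Suc[OF nz g uM])
  have G_i: "G lam i = G nu i * RF"
    unfolding G_def RF_def prod.distrib[symmetric]
    by (intro prod.cong refl) (auto simp: nu_def li below pair_factor_Suc_fst[OF g])
  have G_above: "G lam k = G nu k * RS k" if k: "k \<in> {1..<i}" for k
    unfolding G_def
    by (rule prod_eq_prod_times_if_one_changed[where i = i])
      (use k i above in \<open>auto simp: nu_def li RS_def pair_factor_Suc_snd[OF g]\<close>)
  have G_below: "G lam k = G nu k" if "k \<in> {i<..n}" for k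
    unfolding G_def using that by (intro prod.cong refl) (auto simp: nu_def)
  have "(\<Prod>k\<in>{1..n}. G lam k) = (\<Prod>k\<in>{1..n}. G nu k * R k)"
    using G_i G_above G_below by (intro prod.cong refl) (auto simp: R_def)
  also have "(\<Prod>k\<in>{1..n}. R k) = RF * (\<Prod>k\<in>{1..<i}. RS k)"
  proof -
    have "(\<Prod>k\<in>{1..n} - {i}. R k) = (\<Prod>k\<in>{1..<i}. RS k)"
      by (rule prod.mono_neutral_cong_right) (use i in \<open>auto simp: R_def\<close>)
    thus ?thesis using prod.remove[of "{1..n}" i R] i by (simp add: R_def)
  qed
  ultimately have pairs: "(\<Prod>k\<in>{1..n}. G lam k) = (\<Prod>k\<in>{1..n}. G nu k) * (RF * (\<Prod>k\<in>{1..<i}. RS k))"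
    by (simp add: prod.distrib)
  show ?thesis
    unfolding core_term_def cell_ratio_def rows pairs[unfolded G_def] nu_def[symmetric] RF_def RS_def
    by (simp add: mult_ac)
qed

lemma core_term_zero:
  assumes g: "generic p a Q X"
  shows "core_term p n M a Q X (\<lambda>_. 0) = 1"
proof -
  have "row_factor p n M a Q X i 0 = 1" for i
    unfolding row_factor_def epmon_def using generic_nonzero[OF g] by (simp add: mon_def)
  moreover have "pair_factor p a Q X i j 0 0 = 1" if "i < j" for i j
    unfolding pair_factor_def epmon_def using generic_nonzero[OF g] that by simp
  ultimately show ?thesis unfolding core_term_def by simp
qed

section \<open>Conjugation for generic parameters\<close>

context
  fixes a Q X :: complex
  assumes nz: "a \<noteq> 0" "Q \<noteq> 0" "X \<noteq> 0"
begin

lemma mon_dual: "mon (a * Q * X) (inverse X) (inverse Q) g b c = mon a Q X g (g - c) (g - b)"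
  using nz by (simp add: mon_def power_int_mult_distrib power_int_diff power_int_inverse field_simps)

lemma Emon_dual: "Emon p (a * Q * X) (inverse X) (inverse Q) g b c = Emon p a Q X g (g - c) (g - b)"
  by (simp add: Emon_def mon_dual)

lemma Emon_inverse:
  assumes p: "norm p < 1"
  shows "Emon p a Q X g b c = - mon a Q X g b c * Emon p a Q X (- g) (- b) (- c)"
proof -
  have "Emon p a Q X g b c = Eth p (inverse (mon a Q X (- g) (- b) (- c)))"
    by (simp add: Emon_def mon_inverse[OF nz])
  also have "\<dots> = - inverse (mon a Q X (- g) (- b) (- c)) * Eth p (mon a Q X (- g) (- b) (- c))"
    by (rule Eth_inverse[OF p mon_nonzero[OF nz]])
  finally show ?thesis by (simp add: Emon_def mon_inverse[OF nz])
qed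

lemma Emon0_dual:
  assumes p: "norm p < 1"
  shows "Emon p (a * Q * X) (inverse X) (inverse Q) 0 b c = - mon a Q X 0 (- c) (- b) * Emon p a Q X 0 c b"
  using Emon_inverse[OF p, of 0 "- c" "- b"] by (simp add: Emon_dual)

lemma Emon1_dual: "Emon p (a * Q * X) (inverse X) (inverse Q) 1 b c = Emon p a Q X 1 (1 - c) (1 - b)"
  by (simp add: Emon_dual)

lemma generic_dual: "generic p a Q X \<Longrightarrow> generic p (a * Q * X) (inverse X) (inverse Q)"
  unfolding generic_def Emon_dual by force

end

lemma pair_ratio_quotient_dual:
  fixes I C J D :: int
  assumes nz: "a \<noteq> 0" "Q \<noteq> 0" "X \<noteq> 0" and p: "norm p < 1" and g: "generic p a Q X"
    and J: "1 \<le> J" "J < I" and D: "C < D" "1 \<le> C"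
  shows "pair_ratio_snd p a Q X I C J (D - 1) / pair_ratio_snd p a Q X I C J D
       = pair_ratio_fst p (a * Q * X) (inverse X) (inverse Q) C I D (J - 1)
         / pair_ratio_fst p (a * Q * X) (inverse X) (inverse Q) C I D J"
  unfolding pair_ratio_snd_def pair_ratio_fst_def Emon0_dual[OF nz p] Emon1_dual[OF nz] using J D
  by (simp add: generic_nonzero[OF g] mon_nonzero[OF nz] field_simps mon_mult[OF nz] mon_mult_left[OF nz])

lemma prod_noncell_quotients_dual:
  assumes nz: "a \<noteq> 0" "Q \<noteq> 0" "X \<noteq> 0" and p: "norm p < 1" and g: "generic p a Q X"
    and L: "lam \<in> Lam n N" and i: "i \<le> n" and c: "1 \<le> c"
    and above: "\<forall>j\<in>{1..<i}. c \<le> lam j"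
  shows "(\<Prod>j\<in>{1..<i}. \<Prod>d\<in>{lam j<..N}. pair_ratio_snd p a Q X (int i) (int c) (int j) (int (d - 1))
            / pair_ratio_snd p a Q X (int i) (int c) (int j) (int d))
       = (\<Prod>k\<in>{c<..N}. \<Prod>m\<in>{conjp n N lam k<..i - 1}.
            pair_ratio_fst p (a * Q * X) (inverse X) (inverse Q) (int c) (int i) (int k) (int (m - 1))
            / pair_ratio_fst p (a * Q * X) (inverse X) (inverse Q) (int c) (int i) (int k) (int m))"
  unfolding prod_noncells_conjp[OF L i above] using c
  by (intro prod.cong refl) (auto simp: of_nat_diff pair_ratio_quotient_dual[OF nz p g])

lemma prod_pair_ratio_fst:
  fixes C V :: int
  assumes g: "generic p a Q X" and VC: "V < C" and iN: "i \<le> n"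
  shows "(\<Prod>j\<in>{i<..n}. pair_ratio_fst p a Q X (int i) C (int j) V)
    = Emon p a Q X 0 (C - V) (int n - int i) / Emon p a Q X 0 (C - V) 0
      * (Emon p a Q X 0 (C - 1 - V) (int n - int i + 1) / Emon p a Q X 0 (C - 1 - V) 1)
      * (Emon p a Q X 1 (C + V) (1 - 2 * int i) / Emon p a Q X 1 (C + V) (1 - int i - int n))
      * (Emon p a Q X 1 (C + V - 1) (2 - 2 * int i) / Emon p a Q X 1 (C + V - 1) (2 - int i - int n))"
  using iN
proof (induction n)
  case 0
  hence "i = 0" by simp
  thus ?case using VC by (simp add: generic_nonzero[OF g])
next
  case (Suc n)
  note nzs = generic_nonzero[OF g]
  show ?case
  proof (cases "i = Suc n")
    case True thus ?thesis using VC by (simp add: nzs algebra_simps)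
  next
    case False
    hence iN: "i \<le> n" using Suc.prems by simp
    have "{i<..Suc n} = insert (Suc n) {i<..n}" using iN by auto
    hence "(\<Prod>j\<in>{i<..Suc n}. pair_ratio_fst p a Q X (int i) C (int j) V)
       = pair_ratio_fst p a Q X (int i) C (int (Suc n)) V
         * (\<Prod>j\<in>{i<..n}. pair_ratio_fst p a Q X (int i) C (int j) V)"
      by simp
    also note Suc.IH[OF iN]
    finally show ?thesis unfolding pair_ratio_fst_def using VC iN
      by (simp add: nzs field_simps)
  qed
qed

lemma prod_pair_ratio_snd:
  fixes C U :: int
  assumes g: "generic p a Q X" and CU: "C \<le> U" and t: "1 \<le> t" "t \<le> i"
  shows "(\<Prod>j\<in>{1..<t}. pair_ratio_snd p a Q X (int i) C (int j) U)
    = Emon p a Q X 0 (U - C) (int i - int t + 1) / Emon p a Q X 0 (U - C) (int i)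
      * (Emon p a Q X 0 (U - C + 1) (int i - int t) / Emon p a Q X 0 (U - C + 1) (int i - 1))
      * (Emon p a Q X 1 (U + C) (1 - int i) / Emon p a Q X 1 (U + C) (2 - int i - int t))
      * (Emon p a Q X 1 (U + C - 1) (2 - int i) / Emon p a Q X 1 (U + C - 1) (3 - int i - int t))"
  using t
proof (induction t)
  case 0 thus ?case by simp
next
  case (Suc t)
  note nzs = generic_nonzero[OF g]
  show ?case
  proof (cases "t = 0")
    case True thus ?thesis using CU Suc.prems by (simp add: nzs)
  next
    case False
    hence t1: "1 \<le> t" "t \<le> i" using Suc.prems by auto
    have "{1..<Suc t} = insert t {1..<t}" using t1 by auto
    hence "(\<Prod>j\<in>{1..<Suc t}. pair_ratio_snd p a Q X (int i) C (int j) U)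
       = pair_ratio_snd p a Q X (int i) C (int t) U
         * (\<Prod>j\<in>{1..<t}. pair_ratio_snd p a Q X (int i) C (int j) U)"
      by simp
    also note Suc.IH[OF t1]
    finally show ?thesis unfolding pair_ratio_snd_def using CU t1 Suc.prems
      by (simp add: nzs field_simps)
  qed
qed

lemma boundary_ratio_dual:
  fixes i c n N :: nat
  assumes nz: "a \<noteq> 0" "Q \<noteq> 0" "X \<noteq> 0" and p: "norm p < 1" and g: "generic p a Q X"
    and i: "1 \<le> i" "i \<le> n" and c: "1 \<le> c" "c \<le> N"
  shows "row_ratio p n N a Q X (int i) (int c) * (\<Prod>j\<in>{i<..n}. pair_ratio_fst p a Q X (int i) (int c) (int j) 0)
           * (\<Prod>j\<in>{1..<i}. pair_ratio_snd p a Q X (int i) (int c) (int j) (int N))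
       = row_ratio p N n (a * Q * X) (inverse X) (inverse Q) (int c) (int i)
           * (\<Prod>k\<in>{1..<c}. pair_ratio_snd p (a * Q * X) (inverse X) (inverse Q) (int c) (int i) (int k) (int i))
           * (\<Prod>k\<in>{c<..N}. pair_ratio_fst p (a * Q * X) (inverse X) (inverse Q) (int c) (int i) (int k) (int i - 1))"
proof -
  have nz': "a * Q * X \<noteq> 0" "inverse X \<noteq> 0" "inverse Q \<noteq> 0" using nz by auto
  have g': "generic p (a * Q * X) (inverse X) (inverse Q)" by (rule generic_dual[OF nz g])
  note nzs = generic_nonzero[OF g] mon_nonzero[OF nz]
  have h1: "0 < int c" and h2: "int c \<le> int N" and h3: "int i - 1 < int i" and h4: "int i \<le> int i"
    using c by auto
  have flip_n: "Emon p a Q X 0 (1 - int c) (int i - (1 + int n))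
      = - mon a Q X 0 (1 - int c) (int i - (1 + int n)) * Emon p a Q X 0 (int c - 1) (1 + int n - int i)"
    using Emon_inverse[OF nz p, of 0 "1 - int c" "int i - (1 + int n)"] by simp
  have flip_N: "Emon p a Q X 0 (1 + int N - int c) (int i - 1)
      = - mon a Q X 0 (1 + int N - int c) (int i - 1) * Emon p a Q X 0 (int c - (1 + int N)) (1 - int i)"
    using Emon_inverse[OF nz p, of 0 "1 + int N - int c" "int i - 1"] by simp
  show ?thesis
    unfolding prod_pair_ratio_fst[OF g h1 i(2)] prod_pair_ratio_snd[OF g h2 i(1) order.refl]
      prod_pair_ratio_fst[OF g' h3 c(2)] prod_pair_ratio_snd[OF g' h4 c(1) order.refl]
    using i c
    unfolding row_ratio_def Emon0_dual[OF nz p] Emon1_dual[OF nz] mon_dual[OF nz]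
    by (simp add: nzs field_simps mon_mult[OF nz] mon_mult_left[OF nz])
      (simp add: flip_n flip_N nzs mon_mult[OF nz] mon_mult_left[OF nz] algebra_simps)
qed

lemma cell_ratio_dual:
  assumes nz: "a \<noteq> 0" "Q \<noteq> 0" "X \<noteq> 0" and p: "norm p < 1" and g: "generic p a Q X"
    and L: "lam \<in> Lam n N" and i: "i \<in> {1..n}" and li: "lam i = Suc u"
    and zeros: "\<forall>j\<in>{i<..n}. lam j = 0"
  shows "cell_ratio p n N a Q X lam i (Suc u)
       = cell_ratio p N n (a * Q * X) (inverse X) (inverse Q) (conjp n N lam) (Suc u) i"
proof -
  define c where "c = Suc u"
  define mu where "mu = conjp n N lam"
  define I where "I = int i"
  define C where "C = int c"
  have nz': "a * Q * X \<noteq> 0" "inverse X \<noteq> 0" "inverse Q \<noteq> 0" using nz by auto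
  have g': "generic p (a * Q * X) (inverse X) (inverse Q)" by (rule generic_dual[OF nz g])
  have i1: "1 \<le> i" "i \<le> n" using i by auto
  have c1: "1 \<le> c" "c \<le> N" using LamD(1)[OF L, of i] li by (auto simp: c_def)
  have above: "\<forall>j\<in>{1..<i}. c \<le> lam j"
    using LamD(2)[OF L, of _ i] i li by (auto simp: c_def)
  have mu_above: "mu k = i" if "k \<in> {1..<c}" for k
    using conjp_last_cell(1)[OF L i li zeros] that by (auto simp: mu_def c_def)
  have mu_below: "mu k \<le> i - 1" if "k \<in> {c<..N}" for k
    using conjp_last_cell(2)[OF L i li zeros] that by (force simp: mu_def c_def)
  have "(\<Prod>j\<in>{i<..n}. pair_ratio_fst p a Q X I C (int j) (int (lam j)))
      = (\<Prod>j\<in>{i<..n}. pair_ratio_fst p a Q X I C (int j) 0)"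
    by (rule prod.cong) (auto simp: zeros)
  moreover have "(\<Prod>j\<in>{1..<i}. pair_ratio_snd p a Q X I C (int j) (int (lam j)))
      = (\<Prod>j\<in>{1..<i}. pair_ratio_snd p a Q X I C (int j) (int N))
        * (\<Prod>j\<in>{1..<i}. \<Prod>d\<in>{lam j<..N}. pair_ratio_snd p a Q X I C (int j) (int (d - 1))
            / pair_ratio_snd p a Q X I C (int j) (int d))"
  proof (rule prod_telescope_down[where f = "\<lambda>j d. pair_ratio_snd p a Q X I C (int j) (int d)"])
    fix j d assume "j \<in> {1..<i}" "lam j \<le> d"
    hence "c \<le> d" using above by force
    thus "pair_ratio_snd p a Q X I C (int j) (int d) \<noteq> 0"
      using \<open>j \<in> {1..<i}\<close> by (intro pair_ratio_snd_nonzero[OF g]) (auto simp: I_def C_def)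
  qed (rule LamD(1)[OF L])
  moreover have "(\<Prod>k\<in>{1..<c}. pair_ratio_snd p (a * Q * X) (inverse X) (inverse Q) C I (int k) (int (mu k)))
      = (\<Prod>k\<in>{1..<c}. pair_ratio_snd p (a * Q * X) (inverse X) (inverse Q) C I (int k) I)"
    by (rule prod.cong) (auto simp: mu_above I_def)
  moreover have "(\<Prod>k\<in>{c<..N}. pair_ratio_fst p (a * Q * X) (inverse X) (inverse Q) C I (int k) (int (mu k)))
      = (\<Prod>k\<in>{c<..N}. pair_ratio_fst p (a * Q * X) (inverse X) (inverse Q) C I (int k) (int (i - 1)))
        * (\<Prod>k\<in>{c<..N}. \<Prod>m\<in>{mu k<..i - 1}.
            pair_ratio_fst p (a * Q * X) (inverse X) (inverse Q) C I (int k) (int (m - 1))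
            / pair_ratio_fst p (a * Q * X) (inverse X) (inverse Q) C I (int k) (int m))"
  proof (rule prod_telescope_down[where
        f = "\<lambda>k m. pair_ratio_fst p (a * Q * X) (inverse X) (inverse Q) C I (int k) (int m)"])
    fix k m assume "k \<in> {c<..N}" "m \<le> i - 1"
    thus "pair_ratio_fst p (a * Q * X) (inverse X) (inverse Q) C I (int k) (int m) \<noteq> 0"
      using i1 by (intro pair_ratio_fst_nonzero[OF g']) (auto simp: I_def C_def)
  qed (rule mu_below)
  moreover note prod_noncell_quotients_dual[OF nz p g L i1(2) c1(1) above, folded I_def C_def mu_def]
  moreover have "row_ratio p n N a Q X I C * (\<Prod>j\<in>{i<..n}. pair_ratio_fst p a Q X I C (int j) 0)
           * (\<Prod>j\<in>{1..<i}. pair_ratio_snd p a Q X I C (int j) (int N))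
       = row_ratio p N n (a * Q * X) (inverse X) (inverse Q) C I
           * (\<Prod>k\<in>{1..<c}. pair_ratio_snd p (a * Q * X) (inverse X) (inverse Q) C I (int k) I)
           * (\<Prod>k\<in>{c<..N}. pair_ratio_fst p (a * Q * X) (inverse X) (inverse Q) C I (int k) (int (i - 1)))"
    using boundary_ratio_dual[OF nz p g i1 c1] i1 by (simp add: I_def C_def of_nat_diff)
  ultimately show ?thesis
    unfolding cell_ratio_def c_def[symmetric] mu_def[symmetric] I_def[symmetric] C_def[symmetric]
    by (simp add: mult_ac)
qed

lemma core_term_conjp_generic:
  assumes nz: "a \<noteq> 0" "Q \<noteq> 0" "X \<noteq> 0" and p: "norm p < 1" and g: "generic p a Q X"
    and L: "lam \<in> Lam n N"
  shows "core_term p n N a Q X lam = core_term p N n (a * Q * X) (inverse X) (inverse Q) (conjp n N lam)"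
  using L
proof (induction rule: Lam_last_cell_induct)
  case zero
  have "conjp n N (\<lambda>_. 0) = (\<lambda>_. 0)" by (auto simp: conjp_def)
  thus ?case by (simp add: core_term_zero[OF g] core_term_zero[OF generic_dual[OF nz g]])
next
  case (last_cell lam i u)
  have nz': "a * Q * X \<noteq> 0" "inverse X \<noteq> 0" "inverse Q \<noteq> 0" using nz by auto
  have g': "generic p (a * Q * X) (inverse X) (inverse Q)" by (rule generic_dual[OF nz g])
  note L = last_cell.hyps(1) and i = last_cell.hyps(2) and li = last_cell.hyps(3)
    and zeros = last_cell.hyps(4)
  note col = conjp_last_cell[OF L i li zeros]
  have uN: "Suc u \<le> N" using LamD(1)[OF L, of i] li by simp
  have above: "Suc u \<le> lam j" if "j \<in> {1..<i}" for j
    using LamD(2)[OF L, of j i] that i li by auto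
  have i': "Suc (i - 1) = i" using i by simp
  have col_below: "conjp n N lam k \<le> i - 1" if "k \<in> {Suc u<..N}" for k
    using col(2)[OF that] by simp
  have "core_term p n N a Q X lam
      = core_term p n N a Q X (lam(i := u)) * cell_ratio p n N a Q X lam i (Suc u)"
    by (rule core_term_cell_ratio[where lam = lam, OF nz g i li uN]) (use zeros above in auto)
  also have "core_term p n N a Q X (lam(i := u))
      = core_term p N n (a * Q * X) (inverse X) (inverse Q) ((conjp n N lam)(Suc u := i - 1))"
    using last_cell.IH unfolding col(3) .
  also have "cell_ratio p n N a Q X lam i (Suc u)
      = cell_ratio p N n (a * Q * X) (inverse X) (inverse Q) (conjp n N lam) (Suc u) (Suc (i - 1))"
    unfolding i' by (rule cell_ratio_dual[OF nz p g L i li zeros])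
  also have "core_term p N n (a * Q * X) (inverse X) (inverse Q) ((conjp n N lam)(Suc u := i - 1))
        * cell_ratio p N n (a * Q * X) (inverse X) (inverse Q) (conjp n N lam) (Suc u) (Suc (i - 1))
      = core_term p N n (a * Q * X) (inverse X) (inverse Q) (conjp n N lam)"
    by (rule core_term_cell_ratio[where lam = "conjp n N lam", OF nz' g', symmetric])
      (use col(1) col_below i uN in \<open>auto simp: i' less_Suc_eq_le\<close>)
  finally show ?case .
qed

section \<open>Continuity and density of generic parameters\<close>

lemma epoch_tendsto:
  assumes p: "norm p < 1" and "(y \<longlongrightarrow> c) F" and "(QS \<longlongrightarrow> Q) F" and "c \<noteq> 0" "Q \<noteq> 0" and "0 \<le> k"
  shows "((\<lambda>t. epoch p (y t) (QS t) k) \<longlongrightarrow> epoch p c Q k) F"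
proof -
  have "((\<lambda>t. \<Prod>j<nat k. Eth p (y t * QS t ^ j)) \<longlongrightarrow> (\<Prod>j<nat k. Eth p (c * Q ^ j))) F"
    using assms by (intro tendsto_prod Eth_tendsto[OF p] tendsto_intros) auto
  thus ?thesis using assms(6) by (simp add: epoch_def)
qed

lemma epochP_pair_tendsto:
  assumes p: "norm p < 1" and "(y1 \<longlongrightarrow> c1) F" "(y2 \<longlongrightarrow> c2) F" "(QS \<longlongrightarrow> Q) F" "(XS \<longlongrightarrow> X) F"
    and "c1 \<noteq> 0" "c2 \<noteq> 0" "Q \<noteq> 0" "X \<noteq> 0"
  shows "((\<lambda>t. epochP p [y1 t, y2 t] (QS t) (XS t) n (\<lambda>i. int (lam i)))
      \<longlongrightarrow> epochP p [c1, c2] Q X n (\<lambda>i. int (lam i))) F"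
  unfolding epochP_def using assms
  by (auto intro!: tendsto_intros epoch_tendsto[OF p])

lemma omega_nondeg_Nil: "omega_nondeg p n M a bs Q X \<Longrightarrow> omega_nondeg p n M a [] Q X"
  unfolding omega_nondeg_def epochP_def by auto

lemma omega_term_Nil_tendsto:
  assumes p: "norm p < 1" and L: "lam \<in> Lam n M" and nd: "omega_nondeg p n M a [] Q X"
    and "(aS \<longlongrightarrow> a) F" "(QS \<longlongrightarrow> Q) F" "(XS \<longlongrightarrow> X) F" and "a \<noteq> 0" "Q \<noteq> 0" "X \<noteq> 0"
  shows "((\<lambda>t. omega_term p n M (aS t) [] (QS t) (XS t) lam) \<longlongrightarrow> omega_term p n M a [] Q X lam) F"
proof -
  have "int (lam j) \<le> int (lam i)" if "i \<in> {1..n}" "j \<in> {i<..n}" for i j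
    using LamD(2)[OF L, of i j] that by auto
  thus ?thesis
    using nd assms unfolding omega_term_def append_Nil list.map(1) omega_nondeg_def
    by (intro tendsto_intros epochP_pair_tendsto Eth_tendsto epoch_tendsto) auto
qed

lemma finite_power_int_solutions:
  assumes "e \<noteq> 0"
  shows "finite {t::real. 0 < t \<and> complex_of_real (t powi e) = w}"
proof -
  let ?P = "\<lambda>t::real. 0 < t \<and> complex_of_real (t powi e) = w"
  have "t = s" if "?P t" "?P s" for t s
  proof (rule ccontr)
    assume "t \<noteq> s"
    hence "t powi e \<noteq> s powi e"
      using that assms power_int_strict_mono[of t s e] power_int_strict_mono[of s t e]
        power_int_strict_antimono[of t s e] power_int_strict_antimono[of s t e]
      by (cases t s rule: linorder_cases; cases "0 < e") auto
    thus False using that of_real_eq_iff by metis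
  qed
  hence "{t. ?P t} \<subseteq> {SOME t. ?P t}"
    using someI[of ?P] by blast
  thus ?thesis by (rule finite_subset) simp
qed

lemma obtain_near_one_avoiding_powers:
  fixes h :: "'z :: countable \<Rightarrow> int" and w :: "'z \<Rightarrow> complex"
  assumes "0 < d"
  obtains t :: real where "1 < t" "t < 1 + d" "\<forall>z. h z \<noteq> 0 \<longrightarrow> complex_of_real (t powi h z) \<noteq> w z"
proof -
  define B where "B = (\<Union>z\<in>{z. h z \<noteq> 0}. {t::real. 0 < t \<and> complex_of_real (t powi h z) = w z})"
  have "countable B"
    unfolding B_def
    by (rule countable_UN[OF countableI_type], rule countable_finite, rule finite_power_int_solutions) simp
  hence "\<not> {1<..<1 + d} \<subseteq> B"
    using assms countable_subset uncountable_open_interval[of 1 "1 + d"] by auto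
  then obtain t where "t \<in> {1<..<1 + d}" "t \<notin> B" by blast
  thus ?thesis using that unfolding B_def by auto
qed

lemma generic_scaled:
  assumes p: "norm p < 1" and nz: "a \<noteq> 0" "q \<noteq> 0" "x \<noteq> 0" and t: "t1 \<noteq> 0" "t2 \<noteq> 0" "t3 \<noteq> 0"
    and avoid1: "\<And>b k. b \<noteq> 0 \<Longrightarrow> complex_of_real (t1 powi b) \<noteq> p powi k / q powi b"
    and avoid2: "\<And>b c k. c \<noteq> 0
      \<Longrightarrow> complex_of_real (t2 powi c) \<noteq> p powi k / ((q * t1) powi b * x powi c)"
    and avoid3: "\<And>g b c k. g \<noteq> 0
      \<Longrightarrow> complex_of_real (t3 powi g) \<noteq> p powi k / (a powi g * (q * t1) powi b * (x * t2) powi c)"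
  shows "generic p (a * t3) (q * t1) (x * t2)"
  unfolding generic_def
proof (intro allI impI notI)
  fix g b c :: int assume nontriv: "(g, b, c) \<noteq> (0, 0, 0)" and "Emon p (a * t3) (q * t1) (x * t2) g b c = 0"
  moreover have nz': "a * t3 \<noteq> 0" "q * t1 \<noteq> 0" "x * t2 \<noteq> 0" using nz t by auto
  ultimately obtain k where k: "mon (a * t3) (q * t1) (x * t2) g b c = p powi k"
    using Eth_eq_0_imp_power_int[OF p] mon_nonzero[OF nz'] unfolding Emon_def by blast
  show False
  proof (cases "g \<noteq> 0")
    case True
    have "mon (a * t3) (q * t1) (x * t2) g b c
        = complex_of_real (t3 powi g) * (a powi g * (q * t1) powi b * (x * t2) powi c)"
      by (simp add: mon_def power_int_mult_distrib mult_ac)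
    thus False using k nz' nz avoid3[OF True, of k b c] by (simp add: field_simps)
  next
    case g: False
    show False
    proof (cases "c \<noteq> 0")
      case True
      have "mon (a * t3) (q * t1) (x * t2) g b c = complex_of_real (t2 powi c) * ((q * t1) powi b * x powi c)"
        using g by (simp add: mon_def power_int_mult_distrib mult_ac)
      thus False using k nz' nz avoid2[OF True, of k b] by (simp add: field_simps)
    next
      case False
      hence "b \<noteq> 0" using g nontriv by auto
      have "mon (a * t3) (q * t1) (x * t2) g b c = complex_of_real (t1 powi b) * q powi b"
        using g False by (simp add: mon_def power_int_mult_distrib mult_ac)
      thus False using k nz avoid1[OF \<open>b \<noteq> 0\<close>, of k] by (simp add: field_simps)
    qed
  qed
qed

lemma generic_near:
  assumes p: "norm p < 1" and nz: "a \<noteq> 0" "q \<noteq> 0" "x \<noteq> 0" and "0 < e"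
  obtains a' q' x' where "a' \<noteq> 0" "q' \<noteq> 0" "x' \<noteq> 0" "a' \<noteq> a"
    "norm (a' - a) < e" "norm (q' - q) < e" "norm (x' - x) < e" "generic p a' q' x'"
proof -
  define S where "S = norm a + norm q + norm x"
  define d where "d = e / (S + 1)"
  have "0 \<le> S" by (simp add: S_def)
  hence d: "0 < d" "(S + 1) * d = e" using assms(5) by (auto simp: d_def)
  have close: "norm (c * complex_of_real t - c) < e" if "1 < t" "t < 1 + d" "norm c \<le> S" for c t
  proof -
    have "c * complex_of_real t - c = c * complex_of_real (t - 1)"
      by (simp add: algebra_simps)
    hence "norm (c * complex_of_real t - c) = norm c * \<bar>t - 1\<bar>"
      by (simp only: norm_mult norm_of_real)
    also have "\<dots> = norm c * (t - 1)" using that(1) by simp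
    also have "\<dots> \<le> S * d" using that \<open>0 \<le> S\<close> by (intro mult_mono) auto
    also have "\<dots> < e" using d by (simp add: algebra_simps)
    finally show ?thesis .
  qed
  obtain t1 where t1: "1 < t1" "t1 < 1 + d"
    and avoid1: "\<forall>z :: int \<times> int. fst z \<noteq> 0
      \<longrightarrow> complex_of_real (t1 powi fst z) \<noteq> p powi snd z / q powi fst z"
    by (rule obtain_near_one_avoiding_powers[OF d(1),
        where h = fst and w = "\<lambda>z. p powi snd z / q powi fst z"])
  obtain t2 where t2: "1 < t2" "t2 < 1 + d"
    and avoid2: "\<forall>z :: int \<times> int \<times> int. fst z \<noteq> 0 \<longrightarrow> complex_of_real (t2 powi fst z)
      \<noteq> p powi snd (snd z) / ((q * t1) powi fst (snd z) * x powi fst z)"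
    by (rule obtain_near_one_avoiding_powers[OF d(1),
        where h = fst and w = "\<lambda>z. p powi snd (snd z) / ((q * t1) powi fst (snd z) * x powi fst z)"])
  obtain t3 where t3: "1 < t3" "t3 < 1 + d"
    and avoid3: "\<forall>z :: int \<times> int \<times> int \<times> int. fst z \<noteq> 0 \<longrightarrow> complex_of_real (t3 powi fst z)
      \<noteq> p powi snd (snd (snd z)) / (a powi fst z * (q * t1) powi fst (snd z) * (x * t2) powi fst (snd (snd z)))"
    by (rule obtain_near_one_avoiding_powers[OF d(1), where h = fst and w = "\<lambda>z. p powi snd (snd (snd z))
        / (a powi fst z * (q * t1) powi fst (snd z) * (x * t2) powi fst (snd (snd z)))"])
  have "generic p (a * t3) (q * t1) (x * t2)"
  proof (rule generic_scaled[OF p nz])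
    show "complex_of_real (t1 powi b) \<noteq> p powi k / q powi b" if "b \<noteq> 0" for b k
      using avoid1 that by force
    show "complex_of_real (t2 powi c) \<noteq> p powi k / ((q * t1) powi b * x powi c)" if "c \<noteq> 0" for b c k
      using avoid2 that by force
    show "complex_of_real (t3 powi g) \<noteq> p powi k / (a powi g * (q * t1) powi b * (x * t2) powi c)"
      if "g \<noteq> 0" for g b c k
      using avoid3 that by force
  qed (use t1 t2 t3 in auto)
  moreover have "norm a \<le> S" "norm q \<le> S" "norm x \<le> S" by (simp_all add: S_def)
  hence "norm (a * t3 - a) < e" "norm (q * t1 - q) < e" "norm (x * t2 - x) < e"
    using close t1 t2 t3 by blast+
  moreover have "a * t3 \<noteq> 0" "q * t1 \<noteq> 0" "x * t2 \<noteq> 0" "a * t3 \<noteq> a"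
    using nz t1 t2 t3 by auto
  ultimately show ?thesis using that by blast
qed

lemma generic_islimpt:
  assumes p: "norm p < 1" and "a \<noteq> 0" "q \<noteq> 0" "x \<noteq> 0"
  shows "(a, q, x) islimpt {(a', q', x'). a' \<noteq> 0 \<and> q' \<noteq> 0 \<and> x' \<noteq> 0 \<and> generic p a' q' x'}"
  unfolding islimpt_approachable
proof (intro allI impI)
  fix e :: real assume "0 < e"
  hence "0 < e / 3" by simp
  then obtain a' q' x' where nz: "a' \<noteq> 0" "q' \<noteq> 0" "x' \<noteq> 0" "a' \<noteq> a"
    and close: "norm (a' - a) < e / 3" "norm (q' - q) < e / 3" "norm (x' - x) < e / 3"
    and "generic p a' q' x'"
    by (rule generic_near[OF assms])
  have "dist (a', q', x') (a, q, x) = norm (a' - a, q' - q, x' - x)"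
    by (simp add: dist_norm)
  also have "\<dots> \<le> norm (a' - a) + norm (q' - q, x' - x)"
    by (rule norm_Pair_le)
  also have "\<dots> \<le> norm (a' - a) + (norm (q' - q) + norm (x' - x))"
    by (intro add_left_mono norm_Pair_le)
  also have "\<dots> < e"
    using close by linarith
  finally have "dist (a', q', x') (a, q, x) < e" .
  with nz \<open>generic p a' q' x'\<close>
  show "\<exists>z\<in>{(a', q', x'). a' \<noteq> 0 \<and> q' \<noteq> 0 \<and> x' \<noteq> 0 \<and> generic p a' q' x'}.
      z \<noteq> (a, q, x) \<and> dist z (a, q, x) < e"
    by (intro bexI[of _ "(a', q', x')"]) simp_all
qed

lemma omega_term_Nil_conjp_generic:
  assumes nz: "a \<noteq> 0" "q \<noteq> 0" "x \<noteq> 0" and p: "norm p < 1" and g: "generic p a q x"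
    and L: "lam \<in> Lam n N"
  shows "omega_term p n N a [] q x lam
       = omega_term p N n (a * q * x) [] (inverse x) (inverse q) (conjp n N lam)"
proof -
  have nz': "a * q * x \<noteq> 0" "inverse x \<noteq> 0" "inverse q \<noteq> 0" using nz by auto
  show ?thesis
    using core_term_conjp_generic[OF nz p g L]
    by (simp add: omega_term_Nil_eq_core_term[OF nz L] omega_term_Nil_eq_core_term[OF nz' conjp_in_Lam[OF L]])
qed

lemma omega_term_Nil_conjp:
  assumes p: "norm p < 1" and nz: "a \<noteq> 0" "q \<noteq> 0" "x \<noteq> 0" and L: "lam \<in> Lam n N"
    and ndL: "omega_nondeg p n N a [] q x"
    and ndR: "omega_nondeg p N n (a * q * x) [] (inverse x) (inverse q)"
  shows "omega_term p n N a [] q x lam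
       = omega_term p N n (a * q * x) [] (inverse x) (inverse q) (conjp n N lam)"
proof -
  define G where "G = {(a', q', x'). a' \<noteq> 0 \<and> q' \<noteq> 0 \<and> x' \<noteq> 0 \<and> generic p a' q' x'}"
  define F where "F = at (a, q, x) within G"
  have F: "F \<noteq> bot"
    using generic_islimpt[OF p nz] by (simp add: F_def G_def trivial_limit_within)
  have a: "((\<lambda>z. fst z) \<longlongrightarrow> a) F" and q: "((\<lambda>z. fst (snd z)) \<longlongrightarrow> q) F"
    and x: "((\<lambda>z. snd (snd z)) \<longlongrightarrow> x) F"
    unfolding F_def by (auto intro!: tendsto_eq_intros tendsto_ident_at)
  have "\<forall>\<^sub>F z in F. omega_term p n N (fst z) [] (fst (snd z)) (snd (snd z)) lam
      = omega_term p N n (fst z * fst (snd z) * snd (snd z)) [] (inverse (snd (snd z))) (inverse (fst (snd z)))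
          (conjp n N lam)"
    unfolding F_def eventually_at_filter
  proof (rule always_eventually, intro allI impI)
    fix z assume "z \<in> G"
    thus "omega_term p n N (fst z) [] (fst (snd z)) (snd (snd z)) lam
      = omega_term p N n (fst z * fst (snd z) * snd (snd z)) [] (inverse (snd (snd z))) (inverse (fst (snd z)))
          (conjp n N lam)"
      unfolding G_def by (cases z) (auto intro: omega_term_Nil_conjp_generic[OF _ _ _ p _ L])
  qed
  moreover have "((\<lambda>z. omega_term p n N (fst z) [] (fst (snd z)) (snd (snd z)) lam)
      \<longlongrightarrow> omega_term p n N a [] q x lam) F"
    by (rule omega_term_Nil_tendsto[OF p L ndL a q x nz])
  ultimately have "((\<lambda>z. omega_term p N n (fst z * fst (snd z) * snd (snd z)) [] (inverse (snd (snd z)))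
        (inverse (fst (snd z))) (conjp n N lam)) \<longlongrightarrow> omega_term p n N a [] q x lam) F"
    by (simp only: tendsto_cong)
  moreover have "((\<lambda>z. omega_term p N n (fst z * fst (snd z) * snd (snd z)) [] (inverse (snd (snd z)))
        (inverse (fst (snd z))) (conjp n N lam))
      \<longlongrightarrow> omega_term p N n (a * q * x) [] (inverse x) (inverse q) (conjp n N lam)) F"
    using nz by (intro omega_term_Nil_tendsto[OF p conjp_in_Lam[OF L] ndR] tendsto_intros a q x) auto
  ultimately show ?thesis
    by (rule tendsto_unique[OF F])
qed

lemma omega_term_eq_Nil_times:
  "omega_term p n M a bs Q X lam = omega_term p n M a [] Q X lam *
     (epochP p bs Q X n (\<lambda>i. int (lam i)) / epochP p (map (\<lambda>b. a * Q / b) bs) Q X n (\<lambda>i. int (lam i)))"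
  unfolding omega_term_def epochP_def by (simp add: divide_inverse mult_ac)

lemma epochP_conjp:
  assumes nz: "q \<noteq> 0" "x \<noteq> 0" and L: "lam \<in> Lam n N"
  shows "epochP p ys q x n (\<lambda>i. int (lam i))
       = epochP p ys (inverse x) (inverse q) N (\<lambda>k. int (conjp n N lam k))"
proof -
  have rows_to_columns: "(\<Prod>j\<in>{1..n}. epoch p (y * x powi (1 - int j)) q (int (lam j)))
      = (\<Prod>k\<in>{1..N}. epoch p (y * inverse q powi (1 - int k)) (inverse x) (int (conjp n N lam k)))" for y
  proof -
    have "(\<Prod>j\<in>{1..n}. epoch p (y * x powi (1 - int j)) q (int (lam j)))
        = (\<Prod>j\<in>{1..n}. \<Prod>c\<in>{..<lam j}. Eth p (y * x powi (1 - int j) * q ^ c))"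
      by (simp add: epoch_def)
    also have "\<dots> = (\<Prod>k\<in>{1..N}. \<Prod>m\<in>{..<conjp n N lam k}. Eth p (y * x powi (1 - int (Suc m)) * q ^ (k - 1)))"
      by (rule prod_cells_conjp[OF L])
    also have "\<dots> = (\<Prod>k\<in>{1..N}. \<Prod>m\<in>{..<conjp n N lam k}. Eth p (y * inverse q powi (1 - int k) * inverse x ^ m))"
    proof (intro prod.cong refl)
      fix k m assume "k \<in> {1..N}"
      hence k: "1 - int k = - int (k - 1)" by auto
      have "inverse q powi (1 - int k) = q ^ (k - 1)"
        unfolding k by (simp add: power_int_minus power_int_inverse power_inverse)
      moreover have "x powi (- int m) = inverse x ^ m"
        by (simp add: power_int_minus power_inverse)
      ultimately show "Eth p (y * x powi (1 - int (Suc m)) * q ^ (k - 1))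
          = Eth p (y * inverse q powi (1 - int k) * inverse x ^ m)"
        by (simp add: mult_ac)
    qed
    also have "\<dots> = (\<Prod>k\<in>{1..N}. epoch p (y * inverse q powi (1 - int k)) (inverse x) (int (conjp n N lam k)))"
      by (simp add: epoch_def)
    finally show ?thesis .
  qed
  show ?thesis unfolding epochP_def rows_to_columns ..
qed

lemma omega_term_conjp:
  assumes p: "norm p < 1" and nz: "a \<noteq> 0" "q \<noteq> 0" "x \<noteq> 0" and L: "lam \<in> Lam n N"
    and ndL: "omega_nondeg p n N a bs q x"
    and ndR: "omega_nondeg p N n (a * q * x) bs (inverse x) (inverse q)"
  shows "omega_term p n N a bs q x lam
       = omega_term p N n (a * q * x) bs (inverse x) (inverse q) (conjp n N lam)"
proof -
  have "a * q * x * inverse x = a * q" using nz by simp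
  thus ?thesis
    unfolding omega_term_eq_Nil_times[of p n N a bs] omega_term_eq_Nil_times[of p N n "a * q * x" bs]
      omega_term_Nil_conjp[OF p nz L omega_nondeg_Nil[OF ndL] omega_nondeg_Nil[OF ndR]]
      epochP_conjp[OF nz(2,3) L]
    by (simp only:)
qed

theorem proposition3:
  fixes p a q x :: complex and bs :: "complex list" and r n N :: nat
  assumes "norm p < 1"
    and "r \<ge> 3" and "length bs = r - 3" and "n \<ge> 1"
    and "a \<noteq> 0" and "q \<noteq> 0" and "x \<noteq> 0" and "\<forall>b\<in>set bs. b \<noteq> 0"
    and "omega_nondeg p n N a bs q x"
    and "omega_nondeg p N n (a * q * x) bs (inverse x) (inverse q)"
  shows "Omega p n N a bs q x = Omega p N n (a * q * x) bs (inverse x) (inverse q)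
       \<and> (\<forall>lam\<in>Lam n N. omega_term p n N a bs q x lam
              = omega_term p N n (a * q * x) bs (inverse x) (inverse q) (conjp n N lam))"
proof
  show termwise: "\<forall>lam\<in>Lam n N. omega_term p n N a bs q x lam
      = omega_term p N n (a * q * x) bs (inverse x) (inverse q) (conjp n N lam)"
    using omega_term_conjp[OF assms(1,5,6,7) _ assms(9,10)] by blast
  have "Omega p n N a bs q x
      = (\<Sum>lam\<in>Lam n N. omega_term p N n (a * q * x) bs (inverse x) (inverse q) (conjp n N lam))"
    unfolding Omega_def by (rule sum.cong[OF refl termwise[rule_format]])
  also have "\<dots> = Omega p N n (a * q * x) bs (inverse x) (inverse q)"
    unfolding Omega_def by (rule sum.reindex_bij_betw[OF bij_betw_conjp])
  finally show "Omega p n N a bs q x = Omega p N n (a * q * x) bs (inverse x) (inverse q)" .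
qed

end
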